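(* Let $S_X,S_Y$ be finite nonempty action sets, $\varphi:S_X\times S_Y\to\mathbb{R}$, $\lambda\in[0,1)$, and let $(\sigma_X^0,\sigma_X^* )$ be a reactive learning strategy for $X$ with reachable set $\mathcal{M}_X$. Suppose there exists $\psi:S_X\to\mathbb{R}$ such that, with $\Psi(\tau_X)=\mathbb{E}_{s_X\sim\tau_X}[\psi(s_X)]$, the generalized next-round correction condition $$\varphi(\tau_X,s_Y)=\Psi(\tau_X)-\lambda\Psi(\sigma_X^*[\tau_X,s_Y])-(1-\lambda)\Psi(\sigma_X^0)$$ holds for every $\tau_X\in\mathcal{M}_X$ and $s_Y\in S_Y$. Then $(\sigma_X^0,\sigma_X^* )$ is a $(\varphi,\lambda)$-autocratic strategy.
   Context: Two players $X,Y$ play a repeated game with finite action sets $S_X,S_Y$; $\Delta(S)$ denotes the probability distributions on $S$. $\varphi(\tau_X,s_Y)=\mathbb{E}_{s_X\sim\tau_X}[\varphi(s_X,s_Y)]$. Histories: $\mathcal{H}=\bigcup_{T\ge0}(S_X\times S_Y)^T$; behavioral strategies are maps $\sigma:\mathcal{H}\to\Delta(S)$; players independently draw actions each round from their strategies evaluated at the history of realized action pairs, with $\mathbb{E}_{\sigma_X,\sigma_Y}$ the expectation over the resulting play. A strategy $\sigma_X$ is $(\varphi,\lambda)$-autocratic if for every behavioral strategy $\sigma_Y$ of $Y$, $\mathbb{E}_{\sigma_X,\sigma_Y}\big[(1-\lambda)\sum_{t\ge0}\lambda^t\varphi(s_X^t,s_Y^t)\big]=0$. A reactive learning strategy $(\sigma_X^0,\sigma_X^*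 )$, $\sigma_X^0\in\Delta(S_X)$, $\sigma_X^*:\Delta(S_X)\times S_Y\to\Delta(S_X)$, plays $\tau_X^0=\sigma_X^0$ in round $0$ and $\tau_X^{t+1}=\sigma_X^*[\tau_X^t,s_Y^t]$ in round $t+1$, where $s_Y^t$ is $Y$'s realized action in round $t$. Its reachable set $\mathcal{M}_X$ is the smallest subset of $\Delta(S_X)$ containing $\sigma_X^0$ and closed under $\tau_X\mapsto\sigma_X^*[\tau_X,s_Y]$ for every $s_Y\in S_Y$. *)

theory Defs
  imports "HOL-Probability.Probability"
begin

type_synonym ('x,'y) history = "('x \<times> 'y) list"
type_synonym ('x,'y,'s) bstrategy = "('x,'y) history \<Rightarrow> 's pmf"

fun hist_pmf :: "('x,'y,'x) bstrategy \<Rightarrow> ('x,'y,'y) bstrategy \<Rightarrow> nat \<Rightarrow> ('x,'y) history pmf" where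
  "hist_pmf sX sY 0 = return_pmf []"
| "hist_pmf sX sY (Suc n) =
     bind_pmf (hist_pmf sX sY n) (\<lambda>h.
       bind_pmf (sX h) (\<lambda>a. bind_pmf (sY h) (\<lambda>b. return_pmf (h @ [(a,b)]))))"

definition round_payoff :: "('x \<Rightarrow> 'y \<Rightarrow> real) \<Rightarrow> ('x,'y,'x) bstrategy \<Rightarrow> ('x,'y,'y) bstrategy \<Rightarrow> nat \<Rightarrow> real" where
  "round_payoff phi sX sY t =
     measure_pmf.expectation (hist_pmf sX sY (Suc t)) (\<lambda>h. phi (fst (last h)) (snd (last h)))"

text \<open>Expected normalized discounted payoff
  E[(1-lambda) sum_t lambda^t phi(s_X^t,s_Y^t)], computed by linearity as the
  series of the per-round expectations (phi is bounded, lambda in [0,1)).\<close>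
definition disc_payoff :: "('x \<Rightarrow> 'y \<Rightarrow> real) \<Rightarrow> real \<Rightarrow> ('x,'y,'x) bstrategy \<Rightarrow> ('x,'y,'y) bstrategy \<Rightarrow> real" where
  "disc_payoff phi lam sX sY = (1 - lam) * (\<Sum>t. lam ^ t * round_payoff phi sX sY t)"

definition autocratic :: "('x \<Rightarrow> 'y \<Rightarrow> real) \<Rightarrow> real \<Rightarrow> ('x,'y,'x) bstrategy \<Rightarrow> bool" where
  "autocratic phi lam sX \<longleftrightarrow> (\<forall>sY. disc_payoff phi lam sX sY = 0)"

definition reactive :: "'x pmf \<Rightarrow> ('x pmf \<Rightarrow> 'y \<Rightarrow> 'x pmf) \<Rightarrow> ('x,'y,'x) bstrategy" where
  "reactive s0 sstar h = foldl (\<lambda>\<tau> p. sstar \<tau> (snd p)) s0 h"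

inductive_set reachable :: "'x pmf \<Rightarrow> ('x pmf \<Rightarrow> 'y \<Rightarrow> 'x pmf) \<Rightarrow> 'x pmf set"
  for s0 sstar where
  init: "s0 \<in> reachable s0 sstar"
| step: "\<tau> \<in> reachable s0 sstar \<Longrightarrow> sstar \<tau> y \<in> reachable s0 sstar"

definition mix_val :: "'x pmf \<Rightarrow> ('x \<Rightarrow> real) \<Rightarrow> real" where
  "mix_val \<tau> f = measure_pmf.expectation \<tau> f"

end

theory Submission
  imports Defs
begin

text \<open>Let \<open>A t\<close> be the expected value of \<open>\<Psi>\<close> at the mixed action that \<open>X\<close> uses in round
  \<open>t\<close>. Every such mixed action is reachable, and given the history \<open>X\<close>'s and \<open>Y\<close>'s draws are
  independent, so averaging the correction condition over \<open>Y\<close>'s draw and then over the history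
  gives the expected payoff \<open>A t - \<lambda> A (t + 1) - (1 - \<lambda>) A 0\<close> in round \<open>t\<close>. The discounted
  sum of these terms telescopes to \<open>A 0 - A 0 = 0\<close>, the tail vanishing because \<open>A\<close> is bounded.\<close>

lemma integrable_measure_pmf_bounded:
  fixes f :: "'a \<Rightarrow> real"
  assumes "\<And>x. \<bar>f x\<bar> \<le> B"
  shows "integrable (measure_pmf M) f"
  by (rule measure_pmf.integrable_const_bound[where B = B]) (use assms in auto)

lemma abs_expectation_le:
  fixes f :: "'a \<Rightarrow> real"
  assumes "\<And>x. \<bar>f x\<bar> \<le> B"
  shows "\<bar>measure_pmf.expectation M f\<bar> \<le> B"
proof -
  have "\<bar>measure_pmf.expectation M f\<bar> \<le> measure_pmf.expectation M (\<lambda>x. \<bar>f x\<bar>)"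
    by (rule integral_abs_bound)
  also have "\<dots> \<le> B"
    using assms integrable_measure_pmf_bounded[of "\<lambda>x. \<bar>f x\<bar>" B]
    by (intro measure_pmf.integral_le_const) auto
  finally show ?thesis .
qed

lemma expectation_bind_pmf:
  fixes f :: "'b \<Rightarrow> real"
  assumes "\<And>x. \<bar>f x\<bar> \<le> B"
  shows "measure_pmf.expectation (bind_pmf M N) f =
    measure_pmf.expectation M (\<lambda>x. measure_pmf.expectation (N x) f)"
  unfolding measure_pmf_bind
  by (rule integral_bind[where K = "count_space UNIV" and B = B and B' = 1])
     (use assms measurable_measure_pmf[of N] in
      \<open>auto simp: measure_pmf.emeasure_space_1 measure_pmf.finite_measure_axioms\<close>)

lemma finite_range_abs_bound:
  fixes f :: "'a::finite \<Rightarrow> real"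
  obtains B where "\<And>x. \<bar>f x\<bar> \<le> B"
  using that[of "Max (range (\<lambda>x. \<bar>f x\<bar>))"] by (simp add: Max_ge)

lemma abs_mix_val_le:
  fixes f :: "'a \<Rightarrow> real"
  assumes "\<And>x. \<bar>f x\<bar> \<le> B"
  shows "\<bar>mix_val \<tau> f\<bar> \<le> B"
  unfolding mix_val_def using assms by (rule abs_expectation_le)

text \<open>\<open>Y\<close>'s draw is put outermost so that the correction condition, which is about \<open>X\<close>'s
  mixed action against a fixed action of \<open>Y\<close>, applies to the innermost expectation.\<close>

lemma expectation_hist_pmf_Suc:
  fixes g :: "('x,'y) history \<Rightarrow> real"
  assumes "\<And>h. \<bar>g h\<bar> \<le> B"
  shows "measure_pmf.expectation (hist_pmf sX sY (Suc t)) g =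
    measure_pmf.expectation (hist_pmf sX sY t) (\<lambda>h.
      measure_pmf.expectation (sY h) (\<lambda>b.
        measure_pmf.expectation (sX h) (\<lambda>a. g (h @ [(a, b)]))))"
proof -
  have "hist_pmf sX sY (Suc t) = bind_pmf (hist_pmf sX sY t) (\<lambda>h.
      bind_pmf (sY h) (\<lambda>b. bind_pmf (sX h) (\<lambda>a. return_pmf (h @ [(a, b)]))))"
    by (simp add: bind_commute_pmf[of "sX _"])
  then show ?thesis
    using assms by (simp add: expectation_bind_pmf[where B = B] abs_expectation_le)
qed

lemma reactive_snoc: "reactive s0 sstar (h @ [(a, b)]) = sstar (reactive s0 sstar h) b"
  by (simp add: reactive_def)

lemma reactive_in_reachable: "reactive s0 sstar h \<in> reachable s0 sstar"
proof -
  have "foldl (\<lambda>\<tau> p. sstar \<tau> (snd p)) \<tau> h \<in> reachable s0 sstar"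
    if "\<tau> \<in> reachable s0 sstar" for \<tau>
    using that by (induction h arbitrary: \<tau>) (auto intro: reachable.step)
  then show ?thesis
    unfolding reactive_def by (blast intro: reachable.init)
qed

definition expected_potential ::
    "('x \<Rightarrow> real) \<Rightarrow> ('x,'y,'x) bstrategy \<Rightarrow> ('x,'y,'y) bstrategy \<Rightarrow> nat \<Rightarrow> real" where
  "expected_potential psi sX sY t =
     measure_pmf.expectation (hist_pmf sX sY t) (\<lambda>h. mix_val (sX h) psi)"

lemma abs_expected_potential_le:
  assumes "\<And>x. \<bar>psi x\<bar> \<le> B"
  shows "\<bar>expected_potential psi sX sY t\<bar> \<le> B"
  unfolding expected_potential_def using assms by (intro abs_expectation_le abs_mix_val_le)

lemma expected_potential_reactive_0:
  "expected_potential psi (reactive s0 sstar) sY 0 = mix_val s0 psi"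
  by (simp add: expected_potential_def reactive_def)

lemma expected_potential_reactive_Suc:
  assumes "\<And>x. \<bar>psi x\<bar> \<le> B"
  shows "expected_potential psi (reactive s0 sstar) sY (Suc t) =
    measure_pmf.expectation (hist_pmf (reactive s0 sstar) sY t) (\<lambda>h.
      measure_pmf.expectation (sY h) (\<lambda>b. mix_val (sstar (reactive s0 sstar h) b) psi))"
  unfolding expected_potential_def
  by (subst expectation_hist_pmf_Suc[where B = B]) (simp_all add: assms abs_mix_val_le reactive_snoc)

lemma round_payoff_reactive:
  fixes phi :: "'x \<Rightarrow> 'y \<Rightarrow> real" and psi :: "'x \<Rightarrow> real"
    and sY :: "('x,'y,'y) bstrategy"
  assumes phi_bound: "\<And>a b. \<bar>phi a b\<bar> \<le> C" and psi_bound: "\<And>x. \<bar>psi x\<bar> \<le> B"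
    and correction: "\<And>\<tau> y. \<tau> \<in> reachable s0 sstar \<Longrightarrow>
      mix_val \<tau> (\<lambda>x. phi x y) =
        mix_val \<tau> psi - lam * mix_val (sstar \<tau> y) psi - (1 - lam) * mix_val s0 psi"
  defines "A \<equiv> expected_potential psi (reactive s0 sstar) sY"
  shows "round_payoff phi (reactive s0 sstar) sY t = A t - lam * A (Suc t) - (1 - lam) * A 0"
proof -
  let ?sX = "reactive s0 sstar" and ?c = "mix_val s0 psi"
  let ?next = "\<lambda>h b. mix_val (sstar (?sX h) b) psi"
  have next_integrable: "integrable (measure_pmf M) (?next h)" for M h
    using psi_bound by (intro integrable_measure_pmf_bounded abs_mix_val_le)
  have next_mean_integrable:
    "integrable (measure_pmf M) (\<lambda>h. measure_pmf.expectation (sY h) (?next h))" for M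
    using psi_bound by (intro integrable_measure_pmf_bounded abs_expectation_le abs_mix_val_le)
  have current_integrable: "integrable (measure_pmf M) (\<lambda>h. mix_val (?sX h) psi)" for M
    using psi_bound by (intro integrable_measure_pmf_bounded abs_mix_val_le)
  have "round_payoff phi ?sX sY t =
      measure_pmf.expectation (hist_pmf ?sX sY t) (\<lambda>h.
        measure_pmf.expectation (sY h) (\<lambda>b. mix_val (?sX h) (\<lambda>a. phi a b)))"
    unfolding round_payoff_def mix_val_def
    by (subst expectation_hist_pmf_Suc[where B = C]) (simp_all add: phi_bound)
  also have "\<dots> = measure_pmf.expectation (hist_pmf ?sX sY t) (\<lambda>h.
      mix_val (?sX h) psi - lam * measure_pmf.expectation (sY h) (?next h) - (1 - lam) * ?c)"
    using next_integrable
    by (simp add: correction[OF reactive_in_reachable] measure_pmf.prob_space)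
  also have "\<dots> = A t - lam * A (Suc t) - (1 - lam) * A 0"
    unfolding A_def expected_potential_reactive_Suc[OF psi_bound] expected_potential_reactive_0
    using current_integrable next_mean_integrable
    by (simp add: expected_potential_def measure_pmf.prob_space)
  finally show ?thesis .
qed

lemma discounted_correction_sums_zero:
  fixes A :: "nat \<Rightarrow> real"
  assumes "0 \<le> lam" "lam < 1" and A_bound: "\<And>t. \<bar>A t\<bar> \<le> B"
  shows "(\<lambda>t. lam ^ t * (A t - lam * A (Suc t) - (1 - lam) * A 0)) sums 0"
proof -
  have "(\<lambda>t. lam ^ t * A t) \<longlonglongrightarrow> 0"
  proof (rule Lim_null_comparison)
    show "\<forall>\<^sub>F t in sequentially. norm (lam ^ t * A t) \<le> lam ^ t * B"
      using A_bound \<open>0 \<le> lam\<close> by (auto simp: abs_mult intro!: always_eventually mult_left_mono)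
    show "(\<lambda>t. lam ^ t * B) \<longlonglongrightarrow> 0"
      using assms by (auto intro!: tendsto_mult_left_zero LIMSEQ_power_zero)
  qed
  then have telescope: "(\<lambda>t. lam ^ t * A t - lam ^ Suc t * A (Suc t)) sums A 0"
    using telescope_sums' by fastforce
  have "(\<lambda>t. lam ^ t) sums (1 / (1 - lam))"
    using assms by (intro geometric_sums) auto
  from sums_mult2[OF this, of "(1 - lam) * A 0"]
  have geometric: "(\<lambda>t. lam ^ t * ((1 - lam) * A 0)) sums A 0"
    using assms by simp
  show ?thesis
    using sums_diff[OF telescope geometric] by (simp add: algebra_simps)
qed

theorem proposition1:
  fixes phi :: "'x::finite \<Rightarrow> 'y::finite \<Rightarrow> real"
    and lam :: real
    and s0 :: "'x pmf"
    and sstar :: "'x pmf \<Rightarrow> 'y \<Rightarrow> 'x pmf"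
  assumes "0 \<le> lam" and "lam < 1"
    and "\<exists>psi :: 'x \<Rightarrow> real. \<forall>\<tau> \<in> reachable s0 sstar. \<forall>y.
           mix_val \<tau> (\<lambda>x. phi x y) =
             mix_val \<tau> psi - lam * mix_val (sstar \<tau> y) psi - (1 - lam) * mix_val s0 psi"
  shows "autocratic phi lam (reactive s0 sstar)"
  unfolding autocratic_def
proof
  fix sY :: "('x,'y,'y) bstrategy"
  obtain psi :: "'x \<Rightarrow> real" where correction: "\<And>\<tau> y. \<tau> \<in> reachable s0 sstar \<Longrightarrow>
      mix_val \<tau> (\<lambda>x. phi x y) =
        mix_val \<tau> psi - lam * mix_val (sstar \<tau> y) psi - (1 - lam) * mix_val s0 psi"
    using assms(3) by blast
  obtain B where psi_bound: "\<And>x. \<bar>psi x\<bar> \<le> B"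
    using finite_range_abs_bound[of psi] by blast
  obtain C where phi_bound: "\<And>a b. \<bar>phi a b\<bar> \<le> C"
    using finite_range_abs_bound[of "case_prod phi"] by fastforce
  have "(\<lambda>t. lam ^ t * round_payoff phi (reactive s0 sstar) sY t) sums 0"
    using discounted_correction_sums_zero[OF assms(1,2) abs_expected_potential_le[OF psi_bound]]
    by (simp add: round_payoff_reactive[OF phi_bound psi_bound correction])
  then show "disc_payoff phi lam (reactive s0 sstar) sY = 0"
    by (simp add: disc_payoff_def sums_unique[symmetric])
qed

end
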